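(* Let $P$ and $Q$ be finite posets. If $P$ and $Q$ are both mCDE, then the direct product $P\times Q$ is mCDE.
   Context: All posets are finite. $\mathbb{E}(\mu;f)=\sum_p f(p)\mathbb{P}(\mu;p)$. $\mathrm{ddeg}(p)$ is the number of elements covered by $p$; $\mathrm{uni}$ is the uniform distribution. A $k$-chain is $c_0<\cdots<c_k$; $\mathrm{chain}(k)$ gives $p$ probability $\#\{k\text{-chains }c\ni p\}/((k+1)\#\{k\text{-chains}\})$. If $r$ is the length of a longest chain in a poset $R$, $R$ is mCDE if $\mathbb{E}(\mathrm{chain}(k)_R;\mathrm{ddeg})=\mathbb{E}(\mathrm{uni}_R;\mathrm{ddeg})$ for all $k=0,\ldots,r$. $P\times Q$ has $(p,q)\le(p',q')$ iff $p\le_P p'$ and $q\le_Q q'$. *)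

theory Defs
  imports Complex_Main
begin

definition finite_poset :: "'a set \<Rightarrow> ('a \<Rightarrow> 'a \<Rightarrow> bool) \<Rightarrow> bool" where
  "finite_poset A le \<longleftrightarrow> finite A
     \<and> (\<forall>x\<in>A. le x x)
     \<and> (\<forall>x\<in>A. \<forall>y\<in>A. le x y \<and> le y x \<longrightarrow> x = y)
     \<and> (\<forall>x\<in>A. \<forall>y\<in>A. \<forall>z\<in>A. le x y \<and> le y z \<longrightarrow> le x z)"

definition prod_le :: "('a \<Rightarrow> 'a \<Rightarrow> bool) \<Rightarrow> ('b \<Rightarrow> 'b \<Rightarrow> bool)
    \<Rightarrow> ('a \<times> 'b) \<Rightarrow> ('a \<times> 'b) \<Rightarrow> bool" where
  "prod_le le1 le2 x y \<longleftrightarrow> le1 (fst x) (fst y) \<and> le2 (snd x) (snd y)"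

definition covered_by :: "'a set \<Rightarrow> ('a \<Rightarrow> 'a \<Rightarrow> bool) \<Rightarrow> 'a \<Rightarrow> 'a \<Rightarrow> bool" where
  "covered_by A le q p \<longleftrightarrow> q \<in> A \<and> p \<in> A \<and> le q p \<and> q \<noteq> p
     \<and> \<not> (\<exists>z\<in>A. le q z \<and> z \<noteq> q \<and> le z p \<and> z \<noteq> p)"

definition ddeg :: "'a set \<Rightarrow> ('a \<Rightarrow> 'a \<Rightarrow> bool) \<Rightarrow> 'a \<Rightarrow> nat" where
  "ddeg A le p = card {q \<in> A. covered_by A le q p}"

text \<open>k-chains c_0 < ... < c_k, identified with their (totally ordered) element sets
  of cardinality k+1.\<close>

definition chains :: "'a set \<Rightarrow> ('a \<Rightarrow> 'a \<Rightarrow> bool) \<Rightarrow> nat \<Rightarrow> 'a set set" where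
  "chains A le k = {C. C \<subseteq> A \<and> finite C \<and> card C = Suc k
                        \<and> (\<forall>x\<in>C. \<forall>y\<in>C. le x y \<or> le y x)}"

definition height :: "'a set \<Rightarrow> ('a \<Rightarrow> 'a \<Rightarrow> bool) \<Rightarrow> nat" where
  "height A le = Max {k. chains A le k \<noteq> {}}"

definition prob_chain :: "'a set \<Rightarrow> ('a \<Rightarrow> 'a \<Rightarrow> bool) \<Rightarrow> nat \<Rightarrow> 'a \<Rightarrow> real" where
  "prob_chain A le k p =
     real (card {C \<in> chains A le k. p \<in> C}) / (real (Suc k) * real (card (chains A le k)))"

definition prob_uni :: "'a set \<Rightarrow> 'a \<Rightarrow> real" where
  "prob_uni A p = 1 / real (card A)"

definition expect_chain :: "'a set \<Rightarrow> ('a \<Rightarrow> 'a \<Rightarrow> bool) \<Rightarrow> nat \<Rightarrow> ('a \<Rightarrow> real) \<Rightarrow> real" where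
  "expect_chain A le k f = (\<Sum>p\<in>A. f p * prob_chain A le k p)"

definition expect_uni :: "'a set \<Rightarrow> ('a \<Rightarrow> real) \<Rightarrow> real" where
  "expect_uni A f = (\<Sum>p\<in>A. f p * prob_uni A p)"

text \<open>mCDE. The poset must be nonempty for the uniform distribution (and the
  longest chain length) to make sense.\<close>

definition mCDE :: "'a set \<Rightarrow> ('a \<Rightarrow> 'a \<Rightarrow> bool) \<Rightarrow> bool" where
  "mCDE A le \<longleftrightarrow> A \<noteq> {} \<and>
     (\<forall>k \<le> height A le.
        expect_chain A le k (\<lambda>p. real (ddeg A le p)) = expect_uni A (\<lambda>p. real (ddeg A le p)))"

end

theory Submission
  imports Defs
begin

(* Let G_k(p) count the (k+1)-element multichains with a marked entry equal to p.  The chain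
   counts #{k-chains through p} and the G_k(p) are related by a unitriangular binomial transform,
   so mCDE says exactly that the centred down-degree ddeg - mean is orthogonal to every G_k.
   On P \<times> Q the down-degree and its mean are additive, while G_k(p, q) = \<Sum>_i a_i(p) b_i(q) where
   a_i, b_i split the multichain at position i; as \<Sum>_q b_i(q) does not depend on i, the
   orthogonality relations of P and Q add up to those of P \<times> Q. *)

lemma sum_choose_mult_choose:
  "(\<Sum>i\<le>k. (i choose a) * ((k - i) choose b)) = Suc k choose (a + b + 1)"
proof (induction k arbitrary: b)
  case 0
  then show ?case by (cases a; cases b) auto
next
  case (Suc k)
  show ?case
  proof (cases b)
    case 0
    then show ?thesis
      using sum_choose_upper[of a "Suc k"] by (simp del: binomial_Suc_Suc sum.atMost_Suc)
  next
    case (Suc b')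
    have "(\<Sum>i\<le>Suc k. (i choose a) * ((Suc k - i) choose b))
        = (\<Sum>i\<le>k. (i choose a) * ((k - i) choose b') + (i choose a) * ((k - i) choose b))"
      using Suc by (auto simp: sum.atMost_Suc Suc_diff_le algebra_simps intro!: sum.cong)
    also have "\<dots> = (Suc k choose (a + b' + 1)) + (Suc k choose (a + b + 1))"
      using Suc.IH by (simp add: sum.distrib)
    also have "\<dots> = Suc (Suc k) choose (a + b + 1)"
      using Suc by simp
    finally show ?thesis .
  qed
qed

lemma sum_binomial_Suc:
  fixes x :: "nat \<Rightarrow> 'a::comm_semiring_1"
  shows "(\<Sum>a\<le>Suc i. of_nat (Suc i choose a) * x a)
       = (\<Sum>a\<le>i. of_nat (i choose a) * x a) + (\<Sum>a\<le>i. of_nat (i choose a) * x (Suc a))"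
proof -
  have "(\<Sum>a\<le>Suc i. of_nat (Suc i choose a) * x a)
      = x 0 + (\<Sum>a\<le>i. of_nat (i choose Suc a) * x (Suc a)) + (\<Sum>a\<le>i. of_nat (i choose a) * x (Suc a))"
    by (simp add: sum.atMost_Suc_shift distrib_right sum.distrib add_ac del: sum.atMost_Suc)
  moreover have "(\<Sum>a\<le>i. of_nat (i choose a) * x a) = x 0 + (\<Sum>a\<le>i. of_nat (i choose Suc a) * x (Suc a))"
    using sum.atMost_Suc_shift[of "\<lambda>a. of_nat (i choose a) * x a" i] by (simp add: sum.atMost_Suc binomial_eq_0)
  ultimately show ?thesis by (simp add: add_ac)
qed

lemma binomial_convolution:
  fixes s t :: "nat \<Rightarrow> 'a::comm_semiring_1"
  shows "(\<Sum>i\<le>k. (\<Sum>a\<le>i. of_nat (i choose a) * s a) * (\<Sum>b\<le>k-i. of_nat ((k-i) choose b) * t b))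
       = (\<Sum>j\<le>k. of_nat (Suc k choose Suc j) * (\<Sum>a\<le>j. s a * t (j - a)))"
proof -
  have extend: "(\<Sum>a\<le>i. of_nat (i choose a) * s a) = (\<Sum>a\<le>k. of_nat (i choose a) * s a)"
    "(\<Sum>b\<le>k-i. of_nat ((k-i) choose b) * t b) = (\<Sum>b\<le>k. of_nat ((k-i) choose b) * t b)"
    if "i \<le> k" for i
    using that by (auto intro!: sum.mono_neutral_left) (metis binomial_eq_0 mult_not_zero not_le of_nat_0)+
  have vanish: "of_nat (Suc k choose (a + b + 1)) * (s a * t b) = 0" if "k < a + b" for a b
    using that by (simp add: binomial_eq_0 del: binomial_Suc_Suc)
  have "(\<Sum>i\<le>k. (\<Sum>a\<le>i. of_nat (i choose a) * s a) * (\<Sum>b\<le>k-i. of_nat ((k-i) choose b) * t b))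
     = (\<Sum>i\<le>k. \<Sum>a\<le>k. \<Sum>b\<le>k. of_nat (i choose a) * of_nat ((k-i) choose b) * (s a * t b))"
    by (intro sum.cong refl) (simp only: atMost_iff extend, simp add: sum_product algebra_simps)
  also have "\<dots> = (\<Sum>a\<le>k. \<Sum>i\<le>k. \<Sum>b\<le>k. of_nat (i choose a) * of_nat ((k-i) choose b) * (s a * t b))"
    by (rule sum.swap)
  also have "\<dots> = (\<Sum>a\<le>k. \<Sum>b\<le>k. of_nat (\<Sum>i\<le>k. (i choose a) * ((k - i) choose b)) * (s a * t b))"
    by (rule sum.cong[OF refl], subst sum.swap) (simp add: sum_distrib_right)
  also have "\<dots> = (\<Sum>(a,b)\<in>{..k}\<times>{..k}. of_nat (Suc k choose (a + b + 1)) * (s a * t b))"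
    by (simp add: sum_choose_mult_choose sum.cartesian_product)
  also have "\<dots> = (\<Sum>(a,b)\<in>{(a,b). a + b \<le> k}. of_nat (Suc k choose (a + b + 1)) * (s a * t b))"
    using vanish by (intro sum.mono_neutral_right) (force simp del: binomial_Suc_Suc simp: not_le)+
  also have "\<dots> = (\<Sum>j\<le>k. \<Sum>a\<le>j. of_nat (Suc k choose (a + (j - a) + 1)) * (s a * t (j - a)))"
    by (rule sum.triangle_reindex_eq)
  also have "\<dots> = (\<Sum>j\<le>k. of_nat (Suc k choose Suc j) * (\<Sum>a\<le>j. s a * t (j - a)))"
    by (auto intro!: sum.cong simp: sum_distrib_left)
  finally show ?thesis .
qed

definition dual :: "('a \<Rightarrow> 'a \<Rightarrow> bool) \<Rightarrow> 'a \<Rightarrow> 'a \<Rightarrow> bool" where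
  "dual le x y = le y x"

lemma dual_apply: "dual le x y = le y x"
  by (simp add: dual_def)

lemma finite_poset_finite: "finite_poset A le \<Longrightarrow> finite A"
  by (simp add: finite_poset_def)

lemma finite_poset_dual: "finite_poset A le \<Longrightarrow> finite_poset A (dual le)"
  unfolding finite_poset_def dual_def by blast

lemma finite_chains: "finite A \<Longrightarrow> finite (chains A le k)"
  by (rule finite_subset[of _ "Pow A"]) (auto simp: chains_def)

lemma chain_has_greatest:
  assumes po: "finite_poset A le" and "finite S" "S \<noteq> {}" "S \<subseteq> A"
    and "\<forall>x\<in>S. \<forall>y\<in>S. le x y \<or> le y x"
  shows "\<exists>m\<in>S. \<forall>x\<in>S. le x m"
  using assms(2-)
proof (induction S rule: finite_ne_induct)
  case (singleton x)
  then show ?case using po unfolding finite_poset_def by auto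
next
  case (insert x F)
  then obtain m where m: "m \<in> F" "\<forall>y\<in>F. le y m" by auto
  show ?case
  proof (cases "le m x")
    case True
    then have "\<forall>y\<in>insert x F. le y x"
      using po insert.prems m unfolding finite_poset_def by (metis insert_iff insert_subset subsetD)
    then show ?thesis by auto
  next
    case False
    then show ?thesis using insert.prems m by auto
  qed
qed

definition down_chains :: "'a set \<Rightarrow> ('a \<Rightarrow> 'a \<Rightarrow> bool) \<Rightarrow> nat \<Rightarrow> 'a \<Rightarrow> 'a set set" where
  "down_chains A le i p = {C \<in> chains A le i. p \<in> C \<and> (\<forall>x\<in>C. le x p)}"

lemma finite_down_chains: "finite A \<Longrightarrow> finite (down_chains A le i p)"
  by (rule finite_subset[of _ "chains A le i"]) (auto simp: down_chains_def finite_chains)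

lemma down_chains_0:
  assumes "finite_poset A le" and "p \<in> A"
  shows "down_chains A le 0 p = {{p}}"
  using assms by (auto simp: down_chains_def chains_def card_Suc_eq finite_poset_def)

lemma down_chains_Suc:
  assumes po: "finite_poset A le" and p: "p \<in> A"
  shows "down_chains A le (Suc i) p = insert p ` (\<Union>q\<in>{q\<in>A. le q p \<and> q \<noteq> p}. down_chains A le i q)"
proof
  show "down_chains A le (Suc i) p \<subseteq> insert p ` (\<Union>q\<in>{q\<in>A. le q p \<and> q \<noteq> p}. down_chains A le i q)"
  proof
    fix C assume "C \<in> down_chains A le (Suc i) p"
    then have CA: "C \<subseteq> A" and fC: "finite C" and cC: "card C = Suc (Suc i)" and pC: "p \<in> C"
      and tC: "\<forall>x\<in>C. \<forall>y\<in>C. le x y \<or> le y x" and bC: "\<forall>x\<in>C. le x p"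
      by (auto simp: down_chains_def chains_def)
    have cD: "card (C - {p}) = Suc i" using cC pC fC by simp
    then have "C - {p} \<noteq> {}" by (metis card.empty nat.distinct(1))
    then obtain q where q: "q \<in> C - {p}" "\<forall>x\<in>C - {p}. le x q"
      using chain_has_greatest[OF po, of "C - {p}"] fC CA tC by blast
    then have "C - {p} \<in> down_chains A le i q"
      using CA fC cD tC by (auto simp: down_chains_def chains_def)
    moreover have "q \<in> {q\<in>A. le q p \<and> q \<noteq> p}" using q CA bC by auto
    moreover have "C = insert p (C - {p})" using pC by auto
    ultimately show "C \<in> insert p ` (\<Union>q\<in>{q\<in>A. le q p \<and> q \<noteq> p}. down_chains A le i q)"
      by blast
  qed
next
  show "insert p ` (\<Union>q\<in>{q\<in>A. le q p \<and> q \<noteq> p}. down_chains A le i q) \<subseteq> down_chains A le (Suc i) p"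
  proof clarify
    fix D q assume D: "D \<in> down_chains A le i q" and q: "q \<in> A" "le q p" "q \<noteq> p"
    have antisym: "le p q \<Longrightarrow> False" and trans: "\<And>x. x \<in> A \<Longrightarrow> le x q \<Longrightarrow> le x p"
      and refl: "le p p"
      using po p q unfolding finite_poset_def by blast+
    have DA: "D \<subseteq> A" and "finite D" "card D = Suc i" "\<forall>x\<in>D. \<forall>y\<in>D. le x y \<or> le y x"
      and "\<forall>x\<in>D. le x q"
      using D by (auto simp: down_chains_def chains_def)
    moreover have "p \<notin> D" using antisym \<open>\<forall>x\<in>D. le x q\<close> by blast
    moreover have "\<forall>x\<in>D. le x p" using trans DA \<open>\<forall>x\<in>D. le x q\<close> by blast
    ultimately show "insert p D \<in> down_chains A le (Suc i) p"
      using p refl unfolding down_chains_def chains_def by auto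
  qed
qed

lemma card_down_chains_Suc:
  assumes po: "finite_poset A le" and p: "p \<in> A"
  shows "card (down_chains A le (Suc i) p) = (\<Sum>q\<in>{q\<in>A. le q p \<and> q \<noteq> p}. card (down_chains A le i q))"
proof -
  let ?below = "{q\<in>A. le q p \<and> q \<noteq> p}"
  have antisym: "\<And>x y. x \<in> A \<Longrightarrow> y \<in> A \<Longrightarrow> le x y \<Longrightarrow> le y x \<Longrightarrow> x = y"
    using po unfolding finite_poset_def by blast
  have p_notin: "p \<notin> D" if "D \<in> (\<Union>q\<in>?below. down_chains A le i q)" for D
    using that antisym p by (auto simp: down_chains_def)
  have "inj_on (insert p) (\<Union>q\<in>?below. down_chains A le i q)"
    by (rule inj_onI) (metis p_notin Diff_insert_absorb)
  then have "card (down_chains A le (Suc i) p) = card (\<Union>q\<in>?below. down_chains A le i q)"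
    by (simp add: down_chains_Suc[OF po p] card_image)
  also have "\<dots> = (\<Sum>q\<in>?below. card (down_chains A le i q))"
  proof (rule card_UN_disjoint)
    show "finite ?below" using finite_poset_finite[OF po] by simp
    show "\<forall>q\<in>?below. finite (down_chains A le i q)"
      using finite_poset_finite[OF po] by (simp add: finite_down_chains)
    show "\<forall>q\<in>?below. \<forall>q'\<in>?below. q \<noteq> q' \<longrightarrow> down_chains A le i q \<inter> down_chains A le i q' = {}"
      using antisym by (fastforce simp: down_chains_def)
  qed
  finally show ?thesis .
qed

lemma chain_split_at:
  assumes po: "finite_poset A le" and C: "C \<in> chains A le k" and p: "p \<in> C"
  shows "\<exists>i\<le>k. {x\<in>C. le x p} \<in> down_chains A le i p \<and> {x\<in>C. le p x} \<in> down_chains A (dual le) (k - i) p"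
proof -
  define L where "L = {x\<in>C. le x p}"
  define U where "U = {x\<in>C. le p x}"
  have CA: "C \<subseteq> A" and fC: "finite C" and cC: "card C = Suc k"
    and tC: "\<forall>x\<in>C. \<forall>y\<in>C. le x y \<or> le y x"
    using C by (auto simp: chains_def)
  have refl: "le p p" and antisym: "\<And>x. x \<in> C \<Longrightarrow> le x p \<Longrightarrow> le p x \<Longrightarrow> x = p"
    using po p CA unfolding finite_poset_def by blast+
  have "L \<union> U = C" using tC p unfolding L_def U_def by blast
  moreover have "L \<inter> U = {p}" using antisym p refl unfolding L_def U_def by blast
  moreover have fin: "finite L" "finite U" using fC unfolding L_def U_def by auto
  ultimately have card_sum: "card L + card U = Suc (Suc k)"
    using card_Un_Int[of L U] cC by simp
  have "p \<in> L" "p \<in> U" using p refl unfolding L_def U_def by auto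
  then have "card L \<noteq> 0" "card U \<noteq> 0" using fin by auto
  then obtain i where i: "card L = Suc i" using not0_implies_Suc by blast
  then have "i \<le> k" "card U = Suc (k - i)"
    using card_sum \<open>card U \<noteq> 0\<close> by linarith+
  moreover have "L \<subseteq> C" "U \<subseteq> C" "\<forall>x\<in>L. le x p" "\<forall>x\<in>U. le p x"
    unfolding L_def U_def by auto
  ultimately have "L \<in> down_chains A le i p" "U \<in> down_chains A (dual le) (k - i) p"
    using CA fin tC \<open>p \<in> L\<close> \<open>p \<in> U\<close> i
    unfolding down_chains_def chains_def by (simp_all add: subset_iff dual_apply)
  then show ?thesis using \<open>i \<le> k\<close> unfolding L_def U_def by blast
qed

lemma chain_join_at:
  assumes po: "finite_poset A le"
    and L: "L \<in> down_chains A le i p" and U: "U \<in> down_chains A (dual le) j p"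
  shows "L \<union> U \<in> chains A le (i + j)" and "{x\<in>L \<union> U. le x p} = L" and "{x\<in>L \<union> U. le p x} = U"
proof -
  have antisym: "\<And>x y. x \<in> A \<Longrightarrow> y \<in> A \<Longrightarrow> le x y \<Longrightarrow> le y x \<Longrightarrow> x = y"
    and trans: "\<And>x y z. x \<in> A \<Longrightarrow> y \<in> A \<Longrightarrow> z \<in> A \<Longrightarrow> le x y \<Longrightarrow> le y z \<Longrightarrow> le x z"
    using po unfolding finite_poset_def by blast+
  have m: "L \<subseteq> A" "finite L" "card L = Suc i" "\<forall>x\<in>L. \<forall>y\<in>L. le x y \<or> le y x" "p \<in> L" "\<forall>x\<in>L. le x p"
    "U \<subseteq> A" "finite U" "card U = Suc j" "\<forall>x\<in>U. \<forall>y\<in>U. le x y \<or> le y x" "p \<in> U" "\<forall>x\<in>U. le p x"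
    using L U by (auto simp: down_chains_def chains_def dual_apply)
  show "{x\<in>L \<union> U. le x p} = L" "{x\<in>L \<union> U. le p x} = U"
    using m antisym by blast+
  have "L \<inter> U = {p}" using m antisym by blast
  then have "card (L \<union> U) = Suc (i + j)"
    using card_Un_Int[of L U] m by simp
  moreover have "\<forall>x\<in>L \<union> U. \<forall>y\<in>L \<union> U. le x y \<or> le y x"
    using m trans by (metis Un_iff subsetD)
  ultimately show "L \<union> U \<in> chains A le (i + j)"
    using m by (auto simp: chains_def)
qed

lemma card_chains_through:
  assumes po: "finite_poset A le" and p: "p \<in> A"
  shows "card {C\<in>chains A le k. p\<in>C}
       = (\<Sum>i\<le>k. card (down_chains A le i p) * card (down_chains A (dual le) (k - i) p))"
proof -
  define S where "S i = down_chains A le i p \<times> down_chains A (dual le) (k - i) p" for i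
  have fin: "finite A" using po by (rule finite_poset_finite)
  have "bij_betw (\<lambda>C. ({x\<in>C. le x p}, {x\<in>C. le p x})) {C\<in>chains A le k. p\<in>C} (\<Union>i\<le>k. S i)"
  proof (rule bij_betw_byWitness[where f' = "\<lambda>(L, U). L \<union> U"])
    show "\<forall>C\<in>{C\<in>chains A le k. p\<in>C}. (\<lambda>(L, U). L \<union> U) ({x\<in>C. le x p}, {x\<in>C. le p x}) = C"
      by (auto simp: chains_def)
    show "\<forall>LU\<in>(\<Union>i\<le>k. S i). (\<lambda>C. ({x\<in>C. le x p}, {x\<in>C. le p x})) ((\<lambda>(L, U). L \<union> U) LU) = LU"
      using chain_join_at(2,3)[OF po] unfolding S_def by fastforce
    show "(\<lambda>C. ({x\<in>C. le x p}, {x\<in>C. le p x})) ` {C\<in>chains A le k. p\<in>C} \<subseteq> (\<Union>i\<le>k. S i)"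
      using chain_split_at[OF po] unfolding S_def by blast
    show "(\<lambda>(L, U). L \<union> U) ` (\<Union>i\<le>k. S i) \<subseteq> {C\<in>chains A le k. p\<in>C}"
    proof
      fix C assume "C \<in> (\<lambda>(L, U). L \<union> U) ` (\<Union>i\<le>k. S i)"
      then obtain i L U where "i \<le> k" "C = L \<union> U"
        and L: "L \<in> down_chains A le i p" and U: "U \<in> down_chains A (dual le) (k - i) p"
        unfolding S_def by auto
      then show "C \<in> {C\<in>chains A le k. p\<in>C}"
        using chain_join_at(1)[OF po L U] L by (simp add: down_chains_def)
    qed
  qed
  then have "card {C\<in>chains A le k. p\<in>C} = card (\<Union>i\<le>k. S i)"
    by (rule bij_betw_same_card)
  also have "\<dots> = (\<Sum>i\<le>k. card (S i))"
  proof (rule card_UN_disjoint)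
    show "\<forall>i\<in>{..k}. finite (S i)" using fin by (simp add: S_def finite_down_chains)
    show "\<forall>i\<in>{..k}. \<forall>j\<in>{..k}. i \<noteq> j \<longrightarrow> S i \<inter> S j = {}"
      by (auto simp: S_def down_chains_def chains_def)
  qed simp
  finally show ?thesis
    by (simp add: S_def card_cartesian_product)
qed

text \<open>\<open>down_multichains A le i p\<close> is the number of sequences \<open>x\<^sub>1 \<le> \<dots> \<le> x\<^sub>i \<le> p\<close> in \<open>A\<close>.\<close>

primrec down_multichains :: "'a set \<Rightarrow> ('a \<Rightarrow> 'a \<Rightarrow> bool) \<Rightarrow> nat \<Rightarrow> 'a \<Rightarrow> real" where
  "down_multichains A le 0 p = 1"
| "down_multichains A le (Suc i) p = (\<Sum>q\<in>{q\<in>A. le q p}. down_multichains A le i q)"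

lemma down_multichains_eq_sum_down_chains:
  assumes po: "finite_poset A le"
  shows "p \<in> A \<Longrightarrow> down_multichains A le i p = (\<Sum>a\<le>i. real (i choose a) * real (card (down_chains A le a p)))"
proof (induction i arbitrary: p)
  case 0
  then show ?case using down_chains_0[OF po] by simp
next
  case (Suc i)
  let ?below = "{q\<in>A. le q p \<and> q \<noteq> p}"
  have "{q\<in>A. le q p} = insert p ?below" using po Suc.prems unfolding finite_poset_def by auto
  moreover have "finite ?below" using finite_poset_finite[OF po] by simp
  ultimately have "down_multichains A le (Suc i) p = down_multichains A le i p + (\<Sum>q\<in>?below. down_multichains A le i q)"
    by simp
  also have "(\<Sum>q\<in>?below. down_multichains A le i q)
           = (\<Sum>a\<le>i. real (i choose a) * real (\<Sum>q\<in>?below. card (down_chains A le a q)))"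
    using Suc.IH by (simp add: sum.swap[of _ ?below] sum_distrib_left)
  also have "\<dots> = (\<Sum>a\<le>i. real (i choose a) * real (card (down_chains A le (Suc a) p)))"
    using card_down_chains_Suc[OF po Suc.prems] by simp
  finally show ?case
    using Suc.IH[OF Suc.prems] sum_binomial_Suc[of i "\<lambda>a. real (card (down_chains A le a p))"]
    by (simp del: sum.atMost_Suc)
qed

definition chain_count :: "'a set \<Rightarrow> ('a \<Rightarrow> 'a \<Rightarrow> bool) \<Rightarrow> nat \<Rightarrow> 'a \<Rightarrow> real" where
  "chain_count A le k p = real (card {C\<in>chains A le k. p\<in>C})"

text \<open>\<open>multichain_count A le k p\<close> counts the sequences
  \<open>x\<^sub>1 \<le> \<dots> \<le> x\<^sub>i \<le> p \<le> y\<^sub>1 \<le> \<dots> \<le> y\<^sub>k\<^sub>-\<^sub>i\<close>, i.e. the \<open>G\<^sub>k(p)\<close> above.\<close>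

definition multichain_count :: "'a set \<Rightarrow> ('a \<Rightarrow> 'a \<Rightarrow> bool) \<Rightarrow> nat \<Rightarrow> 'a \<Rightarrow> real" where
  "multichain_count A le k p = (\<Sum>i\<le>k. down_multichains A le i p * down_multichains A (dual le) (k - i) p)"

lemma multichain_count_eq_binomial_sum:
  assumes po: "finite_poset A le" and p: "p \<in> A"
  shows "multichain_count A le k p = (\<Sum>j\<le>k. real (Suc k choose Suc j) * chain_count A le j p)"
proof -
  define s where "s a = real (card (down_chains A le a p))" for a
  define t where "t b = real (card (down_chains A (dual le) b p))" for b
  have "multichain_count A le k p
      = (\<Sum>i\<le>k. (\<Sum>a\<le>i. real (i choose a) * s a) * (\<Sum>b\<le>k-i. real ((k-i) choose b) * t b))"
    unfolding multichain_count_def s_def t_def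
    using down_multichains_eq_sum_down_chains[OF po p] down_multichains_eq_sum_down_chains[OF finite_poset_dual[OF po] p]
    by simp
  also have "\<dots> = (\<Sum>j\<le>k. real (Suc k choose Suc j) * (\<Sum>a\<le>j. s a * t (j - a)))"
    by (rule binomial_convolution)
  also have "\<dots> = (\<Sum>j\<le>k. real (Suc k choose Suc j) * chain_count A le j p)"
    unfolding chain_count_def s_def t_def card_chains_through[OF po p] by simp
  finally show ?thesis .
qed

lemma chain_orthogonal_iff_multichain_orthogonal:
  assumes po: "finite_poset A le"
  shows "(\<forall>k. (\<Sum>p\<in>A. h p * chain_count A le k p) = 0) \<longleftrightarrow> (\<forall>k. (\<Sum>p\<in>A. h p * multichain_count A le k p) = 0)"
proof -
  have binomial: "(\<Sum>p\<in>A. h p * multichain_count A le k p)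
      = (\<Sum>j\<le>k. real (Suc k choose Suc j) * (\<Sum>p\<in>A. h p * chain_count A le j p))" for k
    by (simp add: multichain_count_eq_binomial_sum[OF po] sum_distrib_left sum.swap[of _ A] mult_ac
        cong: sum.cong)
  show ?thesis
  proof
    assume "\<forall>k. (\<Sum>p\<in>A. h p * chain_count A le k p) = 0"
    then show "\<forall>k. (\<Sum>p\<in>A. h p * multichain_count A le k p) = 0" by (simp add: binomial)
  next
    assume multi: "\<forall>k. (\<Sum>p\<in>A. h p * multichain_count A le k p) = 0"
    show "\<forall>k. (\<Sum>p\<in>A. h p * chain_count A le k p) = 0"
    proof
      fix k show "(\<Sum>p\<in>A. h p * chain_count A le k p) = 0"
      proof (induction k rule: less_induct)
        case (less k)
        have "0 = (\<Sum>j\<le>k. real (Suc k choose Suc j) * (\<Sum>p\<in>A. h p * chain_count A le j p))"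
          using multi binomial by metis
        also have "\<dots> = (\<Sum>p\<in>A. h p * chain_count A le k p)"
          using less.IH by (simp add: lessThan_Suc_atMost[symmetric])
        finally show ?case by simp
      qed
    qed
  qed
qed

lemma sum_chain_count:
  assumes "finite A"
  shows "(\<Sum>p\<in>A. chain_count A le k p) = real (Suc k) * real (card (chains A le k))"
proof -
  have "chain_count A le k p = (\<Sum>C\<in>chains A le k. if p \<in> C then 1 else 0)" for p
    unfolding chain_count_def
    using sum.inter_filter[OF finite_chains[OF assms], where g = "\<lambda>_. 1::real" and P = "\<lambda>C. p \<in> C"] by simp
  then have "(\<Sum>p\<in>A. chain_count A le k p) = (\<Sum>p\<in>A. \<Sum>C\<in>chains A le k. if p \<in> C then 1 else 0)"
    by simp
  also have "\<dots> = (\<Sum>C\<in>chains A le k. real (card (A \<inter> C)))"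
    by (subst sum.swap) (simp add: sum.inter_filter[OF assms, symmetric] Int_def)
  also have "\<dots> = (\<Sum>C\<in>chains A le k. real (Suc k))"
    by (intro sum.cong refl) (auto simp: chains_def Int_absorb1)
  finally show ?thesis by simp
qed

lemma chains_nonempty_iff_le_height:
  assumes po: "finite_poset A le" and ne: "A \<noteq> {}"
  shows "chains A le k \<noteq> {} \<longleftrightarrow> k \<le> height A le"
proof -
  let ?K = "{k. chains A le k \<noteq> {}}"
  have down_closed: "chains A le j \<noteq> {}" if k_chain: "chains A le k \<noteq> {}" and "j \<le> k" for j k
  proof -
    obtain C where C: "C \<in> chains A le k" using k_chain by blast
    then have "Suc j \<le> card C" using \<open>j \<le> k\<close> by (simp add: chains_def)
    then obtain T where "T \<subseteq> C" "card T = Suc j" "finite T" by (rule obtain_subset_with_card_n)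
    then have "T \<in> chains A le j" using C by (auto simp: chains_def)
    then show ?thesis by blast
  qed
  have "?K \<subseteq> {..card A}"
  proof
    fix k assume "k \<in> ?K"
    then obtain C where "C \<in> chains A le k" by blast
    then show "k \<in> {..card A}"
      using po card_mono[of A C] by (auto simp: chains_def finite_poset_def)
  qed
  then have "finite ?K" by (rule finite_subset) simp
  obtain p where "p \<in> A" using ne by blast
  then have "{p} \<in> chains A le 0" using po by (auto simp: chains_def finite_poset_def)
  then have "height A le \<in> ?K"
    unfolding height_def using \<open>finite ?K\<close> by (intro Max_in) auto
  then show ?thesis
    using down_closed Max_ge[OF \<open>finite ?K\<close>] unfolding height_def by blast
qed

definition mean_ddeg :: "'a set \<Rightarrow> ('a \<Rightarrow> 'a \<Rightarrow> bool) \<Rightarrow> real" where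
  "mean_ddeg A le = (\<Sum>p\<in>A. real (ddeg A le p)) / real (card A)"

lemma mCDE_iff_chain_orthogonal:
  assumes po: "finite_poset A le" and ne: "A \<noteq> {}"
  shows "mCDE A le \<longleftrightarrow> (\<forall>k. (\<Sum>p\<in>A. (real (ddeg A le p) - mean_ddeg A le) * chain_count A le k p) = 0)"
proof -
  have fin: "finite A" using po by (rule finite_poset_finite)
  let ?f = "\<lambda>p. real (ddeg A le p)"
  let ?N = "\<lambda>k. real (Suc k) * real (card (chains A le k))"
  have uni: "expect_uni A ?f = mean_ddeg A le"
    unfolding expect_uni_def prob_uni_def mean_ddeg_def by (simp add: sum_divide_distrib)
  have centred: "(\<Sum>p\<in>A. (?f p - mean_ddeg A le) * chain_count A le k p)
      = (\<Sum>p\<in>A. ?f p * chain_count A le k p) - mean_ddeg A le * ?N k" for k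
    using sum_chain_count[OF fin, of le k]
    by (simp add: left_diff_distrib sum_subtractf flip: sum_distrib_left)
  have "expect_chain A le k ?f = expect_uni A ?f
      \<longleftrightarrow> (\<Sum>p\<in>A. (?f p - mean_ddeg A le) * chain_count A le k p) = 0"
    if "chains A le k \<noteq> {}" for k
  proof -
    have "?N k \<noteq> 0" using that finite_chains[OF fin] by auto
    moreover have "expect_chain A le k ?f = (\<Sum>p\<in>A. ?f p * chain_count A le k p) / ?N k"
      unfolding expect_chain_def prob_chain_def chain_count_def by (simp add: sum_divide_distrib)
    ultimately show ?thesis unfolding uni centred by (simp add: divide_eq_eq)
  qed
  moreover have "(\<Sum>p\<in>A. (?f p - mean_ddeg A le) * chain_count A le k p) = 0"
    if "chains A le k = {}" for k
    using that by (simp add: chain_count_def)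
  ultimately show ?thesis
    unfolding mCDE_def using ne chains_nonempty_iff_le_height[OF po ne] by metis
qed

lemma mCDE_iff_multichain_orthogonal:
  assumes "finite_poset A le" and "A \<noteq> {}"
  shows "mCDE A le \<longleftrightarrow> (\<forall>k. (\<Sum>p\<in>A. (real (ddeg A le p) - mean_ddeg A le) * multichain_count A le k p) = 0)"
  using mCDE_iff_chain_orthogonal[OF assms] chain_orthogonal_iff_multichain_orthogonal[OF assms(1)]
  by simp

lemma finite_poset_prod:
  assumes "finite_poset P leP" and "finite_poset Q leQ"
  shows "finite_poset (P \<times> Q) (prod_le leP leQ)"
proof -
  have P: "\<forall>x\<in>P. leP x x" "\<forall>x\<in>P. \<forall>y\<in>P. leP x y \<and> leP y x \<longrightarrow> x = y"
    "\<forall>x\<in>P. \<forall>y\<in>P. \<forall>z\<in>P. leP x y \<and> leP y z \<longrightarrow> leP x z"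
    using assms(1) unfolding finite_poset_def by blast+
  have Q: "\<forall>x\<in>Q. leQ x x" "\<forall>x\<in>Q. \<forall>y\<in>Q. leQ x y \<and> leQ y x \<longrightarrow> x = y"
    "\<forall>x\<in>Q. \<forall>y\<in>Q. \<forall>z\<in>Q. leQ x y \<and> leQ y z \<longrightarrow> leQ x z"
    using assms(2) unfolding finite_poset_def by blast+
  show ?thesis
    unfolding finite_poset_def
  proof (intro conjI ballI impI)
    show "finite (P \<times> Q)" using assms by (simp add: finite_poset_finite)
    show "prod_le leP leQ x x" if "x \<in> P \<times> Q" for x
      using that P(1) Q(1) by (auto simp: prod_le_def)
    show "x = y" if "x \<in> P \<times> Q" "y \<in> P \<times> Q" "prod_le leP leQ x y \<and> prod_le leP leQ y x" for x y
      using that P(2) Q(2) unfolding prod_le_def by (metis mem_Times_iff prod_eqI)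
    show "prod_le leP leQ x z"
      if "x \<in> P \<times> Q" "y \<in> P \<times> Q" "z \<in> P \<times> Q" "prod_le leP leQ x y \<and> prod_le leP leQ y z" for x y z
      using that P(3) Q(3) unfolding prod_le_def by (metis mem_Times_iff)
  qed
qed

lemma dual_prod_le: "dual (prod_le leP leQ) = prod_le (dual leP) (dual leQ)"
  by (simp add: fun_eq_iff prod_le_def dual_apply)

lemma down_multichains_prod:
  "p \<in> P \<Longrightarrow> q \<in> Q \<Longrightarrow>
     down_multichains (P \<times> Q) (prod_le leP leQ) i (p, q) = down_multichains P leP i p * down_multichains Q leQ i q"
proof (induction i arbitrary: p q)
  case 0
  then show ?case by simp
next
  case (Suc i)
  have "{z\<in>P \<times> Q. prod_le leP leQ z (p, q)} = {p'\<in>P. leP p' p} \<times> {q'\<in>Q. leQ q' q}"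
    by (auto simp: prod_le_def)
  then have "down_multichains (P \<times> Q) (prod_le leP leQ) (Suc i) (p, q)
      = (\<Sum>z\<in>{p'\<in>P. leP p' p} \<times> {q'\<in>Q. leQ q' q}. down_multichains P leP i (fst z) * down_multichains Q leQ i (snd z))"
    unfolding down_multichains.simps by (intro sum.cong) (auto simp: Suc.IH)
  then show ?case
    by (simp add: sum_product sum.cartesian_product case_prod_unfold)
qed

lemma multichain_count_prod:
  assumes "p \<in> P" and "q \<in> Q"
  shows "multichain_count (P \<times> Q) (prod_le leP leQ) k (p, q) =
    (\<Sum>i\<le>k. (down_multichains P leP i p * down_multichains P (dual leP) (k - i) p)
           * (down_multichains Q leQ i q * down_multichains Q (dual leQ) (k - i) q))"
  unfolding multichain_count_def dual_prod_le using down_multichains_prod[OF assms]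
  by (simp add: algebra_simps)

text \<open>The operator \<open>f \<mapsto> \<lambda>q. \<Sum>q' \<le> q. f q'\<close> is adjoint to its dual, so one step of a multichain can
  migrate from below to above the marked point.\<close>

lemma sum_down_multichains_Suc_swap:
  assumes "finite A"
  shows "(\<Sum>q\<in>A. down_multichains A le (Suc i) q * down_multichains A (dual le) j q)
       = (\<Sum>q\<in>A. down_multichains A le i q * down_multichains A (dual le) (Suc j) q)"
proof -
  have "(\<Sum>q\<in>A. down_multichains A le (Suc i) q * down_multichains A (dual le) j q)
      = (\<Sum>q\<in>A. \<Sum>q'\<in>A. if le q' q then down_multichains A le i q' * down_multichains A (dual le) j q else 0)"
    unfolding down_multichains.simps sum.inter_filter[OF assms] sum_distrib_right
    by (intro sum.cong refl) auto
  also have "\<dots> = (\<Sum>q'\<in>A. \<Sum>q\<in>A. if le q' q then down_multichains A le i q' * down_multichains A (dual le) j q else 0)"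
    by (rule sum.swap)
  also have "\<dots> = (\<Sum>q\<in>A. down_multichains A le i q * down_multichains A (dual le) (Suc j) q)"
    unfolding down_multichains.simps sum.inter_filter[OF assms] sum_distrib_left
    by (intro sum.cong refl) (auto simp: dual_apply)
  finally show ?thesis .
qed

lemma sum_down_multichains_const:
  assumes "finite A"
  shows "i \<le> k \<Longrightarrow> (\<Sum>q\<in>A. down_multichains A le i q * down_multichains A (dual le) (k - i) q)
       = (\<Sum>q\<in>A. down_multichains A (dual le) k q)"
proof (induction i)
  case 0
  then show ?case by simp
next
  case (Suc i)
  then have "k - i = Suc (k - Suc i)" by simp
  then show ?case
    using Suc sum_down_multichains_Suc_swap[OF assms, of le i "k - Suc i"]
    by (simp del: down_multichains.simps)
qed

lemma sum_sum_factor_balanced: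
  fixes a :: "nat \<Rightarrow> 'x \<Rightarrow> 'r::comm_semiring_0" and b :: "nat \<Rightarrow> 'y \<Rightarrow> 'r"
  assumes "\<And>i. i \<le> k \<Longrightarrow> (\<Sum>q\<in>Q. b i q) = c"
  shows "(\<Sum>p\<in>P. \<Sum>q\<in>Q. f p * (\<Sum>i\<le>k. a i p * b i q)) = c * (\<Sum>p\<in>P. f p * (\<Sum>i\<le>k. a i p))"
proof -
  have "(\<Sum>q\<in>Q. f p * (\<Sum>i\<le>k. a i p * b i q)) = f p * (\<Sum>i\<le>k. a i p * (\<Sum>q\<in>Q. b i q))" for p
    by (subst sum_distrib_left[symmetric], subst sum.swap) (simp add: sum_distrib_left)
  also have "\<dots> p = c * (f p * (\<Sum>i\<le>k. a i p))" for p
    using assms by (simp add: sum_distrib_left sum_distrib_right mult_ac)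
  finally show ?thesis by (simp add: sum_distrib_left)
qed

lemma multichain_orthogonal_prod:
  assumes "finite P" and "finite Q"
    and P_orth: "\<forall>k. (\<Sum>p\<in>P. f p * multichain_count P leP k p) = 0"
    and Q_orth: "\<forall>k. (\<Sum>q\<in>Q. g q * multichain_count Q leQ k q) = 0"
  shows "(\<Sum>z\<in>P \<times> Q. (f (fst z) + g (snd z)) * multichain_count (P \<times> Q) (prod_le leP leQ) k z) = 0"
proof -
  define a where "a i p = down_multichains P leP i p * down_multichains P (dual leP) (k - i) p" for i p
  define b where "b i q = down_multichains Q leQ i q * down_multichains Q (dual leQ) (k - i) q" for i q
  have "multichain_count (P \<times> Q) (prod_le leP leQ) k z = (\<Sum>i\<le>k. a i (fst z) * b i (snd z))"
    if "z \<in> P \<times> Q" for z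
    using that by (auto simp: multichain_count_prod a_def b_def)
  then have "(\<Sum>z\<in>P \<times> Q. (f (fst z) + g (snd z)) * multichain_count (P \<times> Q) (prod_le leP leQ) k z)
      = (\<Sum>p\<in>P. \<Sum>q\<in>Q. f p * (\<Sum>i\<le>k. a i p * b i q) + g q * (\<Sum>i\<le>k. b i q * a i p))"
    by (simp add: sum.cartesian_product case_prod_unfold distrib_right mult.commute cong: sum.cong)
  also have "\<dots> = (\<Sum>p\<in>P. \<Sum>q\<in>Q. f p * (\<Sum>i\<le>k. a i p * b i q))
                + (\<Sum>q\<in>Q. \<Sum>p\<in>P. g q * (\<Sum>i\<le>k. b i q * a i p))"
    by (simp add: sum.distrib sum.swap[of _ P])
  also have "\<dots> = (\<Sum>q\<in>Q. down_multichains Q (dual leQ) k q) * (\<Sum>p\<in>P. f p * multichain_count P leP k p)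
                + (\<Sum>p\<in>P. down_multichains P (dual leP) k p) * (\<Sum>q\<in>Q. g q * multichain_count Q leQ k q)"
    unfolding multichain_count_def a_def[symmetric] b_def[symmetric]
    using sum_down_multichains_const[OF \<open>finite P\<close>] sum_down_multichains_const[OF \<open>finite Q\<close>]
    by (simp add: sum_sum_factor_balanced a_def b_def)
  finally show ?thesis using P_orth Q_orth by simp
qed

lemma covered_by_mem: "covered_by A le q p \<Longrightarrow> q \<in> A"
  by (simp add: covered_by_def)

lemma covered_by_prod:
  assumes "finite_poset P leP" and "finite_poset Q leQ" and p: "p \<in> P" and q: "q \<in> Q"
  shows "covered_by (P \<times> Q) (prod_le leP leQ) (p', q') (p, q) \<longleftrightarrow>
     (covered_by P leP p' p \<and> q' = q) \<or> (p' = p \<and> covered_by Q leQ q' q)"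
proof -
  have rP: "\<And>x. x \<in> P \<Longrightarrow> leP x x" and aP: "\<And>x y. x \<in> P \<Longrightarrow> y \<in> P \<Longrightarrow> leP x y \<Longrightarrow> leP y x \<Longrightarrow> x = y"
    and rQ: "\<And>x. x \<in> Q \<Longrightarrow> leQ x x" and aQ: "\<And>x y. x \<in> Q \<Longrightarrow> y \<in> Q \<Longrightarrow> leQ x y \<Longrightarrow> leQ y x \<Longrightarrow> x = y"
    using assms(1,2) unfolding finite_poset_def by blast+
  show ?thesis
  proof
    assume cover: "covered_by (P \<times> Q) (prod_le leP leQ) (p', q') (p, q)"
    \<comment> \<open>otherwise \<open>(p', q)\<close> would lie strictly between \<open>(p', q')\<close> and \<open>(p, q)\<close>\<close>
    then have "p' = p \<or> q' = q"
      using rP[of p'] rQ[of q] p unfolding covered_by_def prod_le_def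
      by (smt (verit) SigmaI fst_conv mem_Sigma_iff snd_conv)
    then show "(covered_by P leP p' p \<and> q' = q) \<or> (p' = p \<and> covered_by Q leQ q' q)"
      using cover rP[of p] rQ[of q] p q unfolding covered_by_def prod_le_def by auto
  next
    assume "(covered_by P leP p' p \<and> q' = q) \<or> (p' = p \<and> covered_by Q leQ q' q)"
    then show "covered_by (P \<times> Q) (prod_le leP leQ) (p', q') (p, q)"
      using aP[of _ p] aQ[of _ q] rP rQ p q unfolding covered_by_def prod_le_def by auto
  qed
qed

lemma ddeg_prod:
  assumes poP: "finite_poset P leP" and poQ: "finite_poset Q leQ" and p: "p \<in> P" and q: "q \<in> Q"
  shows "ddeg (P \<times> Q) (prod_le leP leQ) (p, q) = ddeg P leP p + ddeg Q leQ q"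
proof -
  let ?lower_P = "{p'\<in>P. covered_by P leP p' p} \<times> {q}"
  let ?lower_Q = "{p} \<times> {q'\<in>Q. covered_by Q leQ q' q}"
  have "z \<in> {z\<in>P \<times> Q. covered_by (P \<times> Q) (prod_le leP leQ) z (p, q)} \<longleftrightarrow> z \<in> ?lower_P \<union> ?lower_Q" for z
    using covered_by_prod[OF poP poQ p q, of "fst z" "snd z"] covered_by_mem[of "P \<times> Q" _ z "(p, q)"]
      covered_by_mem[of P leP "fst z" p] covered_by_mem[of Q leQ "snd z" q] p q
    by (cases z) auto
  then have "{z\<in>P \<times> Q. covered_by (P \<times> Q) (prod_le leP leQ) z (p, q)} = ?lower_P \<union> ?lower_Q"
    by blast
  moreover have "card (?lower_P \<union> ?lower_Q) = card ?lower_P + card ?lower_Q"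
    using finite_poset_finite[OF poP] finite_poset_finite[OF poQ]
    by (intro card_Un_disjoint) (auto simp: covered_by_def)
  ultimately show ?thesis
    unfolding ddeg_def by (simp add: card_cartesian_product)
qed

lemma mean_ddeg_prod:
  assumes poP: "finite_poset P leP" and poQ: "finite_poset Q leQ" and "P \<noteq> {}" and "Q \<noteq> {}"
  shows "mean_ddeg (P \<times> Q) (prod_le leP leQ) = mean_ddeg P leP + mean_ddeg Q leQ"
proof -
  have fin: "finite P" "finite Q" using poP poQ finite_poset_finite by blast+
  have "mean_ddeg (P \<times> Q) (prod_le leP leQ)
      = (\<Sum>z\<in>P \<times> Q. real (ddeg (P \<times> Q) (prod_le leP leQ) z)) / (real (card P) * real (card Q))"
    by (simp add: mean_ddeg_def card_cartesian_product)
  also have "(\<Sum>z\<in>P \<times> Q. real (ddeg (P \<times> Q) (prod_le leP leQ) z))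
      = (\<Sum>p\<in>P. \<Sum>q\<in>Q. real (ddeg P leP p) + real (ddeg Q leQ q))"
    unfolding sum.cartesian_product by (intro sum.cong refl) (auto simp: ddeg_prod[OF poP poQ])
  also have "\<dots> = real (card Q) * (\<Sum>p\<in>P. real (ddeg P leP p)) + real (card P) * (\<Sum>q\<in>Q. real (ddeg Q leQ q))"
    by (simp add: sum.distrib sum_distrib_left sum.swap[of _ Q] mult.commute)
  finally show ?thesis
    unfolding mean_ddeg_def using fin assms(3,4) by (simp add: field_simps)
qed

theorem proposition2p9:
  fixes P :: "'a set" and leP :: "'a \<Rightarrow> 'a \<Rightarrow> bool"
    and Q :: "'b set" and leQ :: "'b \<Rightarrow> 'b \<Rightarrow> bool"
  assumes "finite_poset P leP" and "finite_poset Q leQ"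
    and "mCDE P leP" and "mCDE Q leQ"
  shows "mCDE (P \<times> Q) (prod_le leP leQ)"
proof -
  have ne: "P \<noteq> {}" "Q \<noteq> {}" using assms(3,4) by (auto simp: mCDE_def)
  have fin: "finite P" "finite Q" using assms(1,2) finite_poset_finite by blast+
  let ?hP = "\<lambda>p. real (ddeg P leP p) - mean_ddeg P leP"
  let ?hQ = "\<lambda>q. real (ddeg Q leQ q) - mean_ddeg Q leQ"
  let ?PQ = "P \<times> Q" and ?le = "prod_le leP leQ"
  have orth_P: "\<forall>k. (\<Sum>p\<in>P. ?hP p * multichain_count P leP k p) = 0"
    using assms(3) mCDE_iff_multichain_orthogonal[OF assms(1) ne(1)] by blast
  have orth_Q: "\<forall>k. (\<Sum>q\<in>Q. ?hQ q * multichain_count Q leQ k q) = 0"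
    using assms(4) mCDE_iff_multichain_orthogonal[OF assms(2) ne(2)] by blast
  have "(\<Sum>z\<in>?PQ. (real (ddeg ?PQ ?le z) - mean_ddeg ?PQ ?le) * multichain_count ?PQ ?le k z)
      = (\<Sum>z\<in>?PQ. (?hP (fst z) + ?hQ (snd z)) * multichain_count ?PQ ?le k z)" for k
    by (intro sum.cong refl)
      (auto simp: ddeg_prod[OF assms(1,2)] mean_ddeg_prod[OF assms(1,2) ne])
  also have "\<dots> k = 0" for k
    by (rule multichain_orthogonal_prod[OF fin orth_P orth_Q])
  finally have "\<forall>k. (\<Sum>z\<in>?PQ. (real (ddeg ?PQ ?le z) - mean_ddeg ?PQ ?le) * multichain_count ?PQ ?le k z) = 0"
    by blast
  moreover have "?PQ \<noteq> {}" using ne by simp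
  ultimately show ?thesis
    using mCDE_iff_multichain_orthogonal[OF finite_poset_prod[OF assms(1,2)]] by blast
qed

end
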